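(* With the notation of the context, for every $v=\sum_{i,j}x_{ij}(i,j)\in V$ we have $$\kappa_A(v)\ \le\ \frac1N\sum_{i\ge j}x_{ij}+\Big(1-\frac1N\Big)\sum_{i<j}x_{ij},$$ and the same inequality holds with $\kappa_B$ in place of $\kappa_A$.
   Context: Let $A,B$ be groups, $L\ge1$, $a_1,\dots,a_L\in A\setminus\{1\}$, $b_1,\dots,b_L\in B\setminus\{1\}$. Let $N\in\{2,3,\dots\}\cup\{\infty\}$ be the minimum of the orders of $a_1,\dots,a_L,b_1,\dots,b_L$ (convention $1/\infty=0$). Let $W$ be the real vector space with basis the formal symbols $(i,j)$, $1\le i,j\le L$. Let $V=\{\sum_{i,j}x_{ij}(i,j): x_{ij}\ge0,\ \sum_i x_{ij}=1 \text{ for all } j,\ \sum_j x_{ij}=1\text{ for all } i\}$. A disk vector in $A$ is an element of $W$ of the form $\sum_{j=1}^k (i_j,i_{j+1})$ with $k\ge1$, indices $i_1,\dots,i_k\in\{1,\dots,L\}$, $i_{k+1}=i_1$, and $a_{i_1}a_{i_2}\cdots a_{i_k}=1$ in $A$; let $\mathcal D_A$ be the set of disk vectors in $A$, and define $\mathcal D_B$ analogously using the $b_i$. For $v\in V$ set $\kappa_A(v)=\sup\{\sum_s t_s : v=\sum_s t_s d_s+\sum_{i,j}x'_{ij}(i,j),\ t_s\ge0,\ d_s\in\mathcal D_A,\ x'_{ij}\ge 0\}$ (finite sums), and define $\kappa_B$ analogously with $\mathcal D_B$. *)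

theory Defs
  imports "HOL-Algebra.Multiplicative_Group" "HOL-Library.Extended_Nat" Complex_Main
begin

text \<open>Order of a group element as an extended natural (infinite order gives \<infinity>).
  group.ord returns 0 exactly for elements of infinite order.\<close>
definition eord :: "('a, 'b) monoid_scheme \<Rightarrow> 'a \<Rightarrow> enat" where
  "eord G x = (if group.ord G x = 0 then \<infinity> else enat (group.ord G x))"

definition Nmin :: "('a, 'c) monoid_scheme \<Rightarrow> ('b, 'd) monoid_scheme \<Rightarrow> nat
    \<Rightarrow> (nat \<Rightarrow> 'a) \<Rightarrow> (nat \<Rightarrow> 'b) \<Rightarrow> enat" where
  "Nmin A B L a b = Min ((\<lambda>i. eord A (a i)) ` {1..L} \<union> (\<lambda>i. eord B (b i)) ` {1..L})"

definition recip :: "enat \<Rightarrow> real" where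
  "recip N = (case N of enat n \<Rightarrow> 1 / real n | \<infinity> \<Rightarrow> 0)"

definition gprod :: "('a, 'b) monoid_scheme \<Rightarrow> 'a list \<Rightarrow> 'a" where
  "gprod G xs = foldr (\<lambda>x y. x \<otimes>\<^bsub>G\<^esub> y) xs \<one>\<^bsub>G\<^esub>"

text \<open>Elements of W are represented by their coefficient functions x i j, (i,j) \<in> {1..L}^2.\<close>
definition inV :: "nat \<Rightarrow> (nat \<Rightarrow> nat \<Rightarrow> real) \<Rightarrow> bool" where
  "inV L x \<longleftrightarrow> (\<forall>i\<in>{1..L}. \<forall>j\<in>{1..L}. x i j \<ge> 0)
     \<and> (\<forall>j\<in>{1..L}. (\<Sum>i=1..L. x i j) = 1)
     \<and> (\<forall>i\<in>{1..L}. (\<Sum>j=1..L. x i j) = 1)"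

definition disk_seq :: "('a, 'b) monoid_scheme \<Rightarrow> nat \<Rightarrow> (nat \<Rightarrow> 'a) \<Rightarrow> nat list \<Rightarrow> bool" where
  "disk_seq G L a is \<longleftrightarrow> is \<noteq> [] \<and> set is \<subseteq> {1..L} \<and> gprod G (map a is) = \<one>\<^bsub>G\<^esub>"

text \<open>The vector \<Sum>_{t} (i_t, i_{t+1}) with i_{k+1} = i_1, as coefficient function.\<close>
definition disk_vec :: "nat list \<Rightarrow> nat \<Rightarrow> nat \<Rightarrow> real" where
  "disk_vec is i j = real (card {t. t < length is \<and> is ! t = i
                                 \<and> is ! ((t + 1) mod length is) = j})"

definition kappa :: "('a, 'b) monoid_scheme \<Rightarrow> nat \<Rightarrow> (nat \<Rightarrow> 'a)
    \<Rightarrow> (nat \<Rightarrow> nat \<Rightarrow> real) \<Rightarrow> real" where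
  "kappa G L a x = Sup {(\<Sum>(t, is) \<leftarrow> ds. t) | ds.
      (\<forall>(t, is) \<in> set ds. t \<ge> 0 \<and> disk_seq G L a is)
      \<and> (\<exists>x'. \<forall>i\<in>{1..L}. \<forall>j\<in>{1..L}. x' i j \<ge> 0
              \<and> x i j = (\<Sum>(t, is) \<leftarrow> ds. t * disk_vec is i j) + x' i j)}"

end

theory Submission imports Defs begin

text \<open>Weight every pair (i,j) by r if j \<le> i and by 1 - r if i < j. For r = 1/N every disk vector
  has weight at least 1: if its cyclic index sequence ever ascends it must also somewhere fail to
  ascend, which already contributes r + (1 - r); otherwise it is constant, so it records a relation
  a_i^k = 1 with k \<ge> N, contributing k/N \<ge> 1. Hence every admissible decomposition of v has total
  coefficient at most the weight of v, which is the claimed bound.\<close>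

definition pair_weight :: "real \<Rightarrow> nat \<Rightarrow> nat \<Rightarrow> real" where
  "pair_weight r i j = (if j \<le> i then r else 1 - r)"

definition weighted_total :: "real \<Rightarrow> nat \<Rightarrow> (nat \<Rightarrow> nat \<Rightarrow> real) \<Rightarrow> real" where
  "weighted_total r L y = (\<Sum>i\<in>{1..L}. \<Sum>j\<in>{1..L}. pair_weight r i j * y i j)"

lemma pair_weight_nonneg: "0 \<le> r \<Longrightarrow> r \<le> 1 \<Longrightarrow> 0 \<le> pair_weight r i j"
  unfolding pair_weight_def by auto

lemma weighted_total_nonneg:
  assumes "0 \<le> r" "r \<le> 1" "\<forall>i\<in>{1..L}. \<forall>j\<in>{1..L}. 0 \<le> y i j"
  shows "0 \<le> weighted_total r L y"
  unfolding weighted_total_def using assms by (intro sum_nonneg mult_nonneg_nonneg pair_weight_nonneg) auto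

lemma weighted_total_add:
  "weighted_total r L (\<lambda>i j. y i j + z i j) = weighted_total r L y + weighted_total r L z"
  unfolding weighted_total_def by (simp add: distrib_left sum.distrib)

lemma weighted_total_scale:
  "weighted_total r L (\<lambda>i j. c * y i j) = c * weighted_total r L y"
  unfolding weighted_total_def by (simp add: sum_distrib_left algebra_simps)

lemma weighted_total_sum_list:
  "weighted_total r L (\<lambda>i j. \<Sum>(t, is) \<leftarrow> ds. t * disk_vec is i j)
     = (\<Sum>(t, is) \<leftarrow> ds. t * weighted_total r L (disk_vec is))"
proof (induction ds)
  case Nil
  then show ?case by (simp add: weighted_total_def)
next
  case (Cons p ds)
  then show ?case
    by (cases p) (simp add: weighted_total_add weighted_total_scale)
qed

lemma cyclic_non_ascent:
  fixes xs :: "'a::linorder list"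
  assumes "xs \<noteq> []"
  shows "\<exists>t<length xs. xs ! (Suc t mod length xs) \<le> xs ! t"
proof -
  obtain t where t: "t < length xs" "xs ! t = Max (set xs)"
    using Max_in[of "set xs"] assms by (auto simp: in_set_conv_nth)
  have "xs ! (Suc t mod length xs) \<le> Max (set xs)"
    using assms by (intro Max_ge) auto
  with t show ?thesis by auto
qed

lemma cyclic_non_ascending_const:
  fixes xs :: "'a::linorder list"
  assumes "xs \<noteq> []" and step: "\<forall>t<length xs. xs ! (Suc t mod length xs) \<le> xs ! t"
  shows "xs = replicate (length xs) (xs ! 0)"
proof -
  define k where "k = length xs"
  have "k > 0" using assms(1) k_def by simp
  have decreasing: "xs ! t \<le> xs ! s" if "s \<le> t" "t < k" for s t
    using that
  proof (induction t)
    case (Suc t)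
    then have "xs ! Suc t \<le> xs ! t" using step[rule_format, of t] k_def by simp
    with Suc show ?case by (cases "s = Suc t") auto
  qed simp
  have wrap: "xs ! 0 \<le> xs ! (k - 1)"
    using step[rule_format, of "k - 1"] \<open>k > 0\<close> k_def by simp
  have "xs ! t = xs ! 0" if "t < k" for t
  proof -
    have "xs ! (k - 1) \<le> xs ! t" using decreasing[of t "k - 1"] that by simp
    then show ?thesis using decreasing[of 0 t] that wrap by (simp add: order_antisym)
  qed
  then show ?thesis by (intro nth_equalityI) (auto simp: k_def)
qed

lemma disk_vec_eq_sum:
  "disk_vec is i j
     = (\<Sum>t<length is. if is ! t = i \<and> is ! (Suc t mod length is) = j then 1 else 0)"
proof -
  have "{t. t < length is \<and> is ! t = i \<and> is ! (Suc t mod length is) = j}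
      = {t \<in> {..<length is}. is ! t = i \<and> is ! (Suc t mod length is) = j}" by auto
  then show ?thesis unfolding disk_vec_def by (simp add: sum.inter_filter[symmetric])
qed

lemma weighted_total_disk_vec:
  assumes "set is \<subseteq> {1..L}"
  shows "weighted_total r L (disk_vec is)
           = (\<Sum>t<length is. pair_weight r (is ! t) (is ! (Suc t mod length is)))"
proof -
  define next_of where "next_of t = is ! (Suc t mod length is)" for t
  have "weighted_total r L (disk_vec is)
      = (\<Sum>t<length is. \<Sum>i\<in>{1..L}. \<Sum>j\<in>{1..L}.
           if is ! t = i \<and> next_of t = j then pair_weight r i j else 0)"
    unfolding weighted_total_def disk_vec_eq_sum next_of_def
    by (simp add: sum_distrib_left if_distrib sum.swap[of _ "{..<length is}"] cong: if_cong)
  also have "\<dots> = (\<Sum>t<length is. pair_weight r (is ! t) (next_of t))"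
  proof (rule sum.cong[OF refl])
    fix t assume "t \<in> {..<length is}"
    then have "t < length is" "Suc t mod length is < length is" by (auto intro: mod_less_divisor)
    then have "is ! t \<in> {1..L}" "next_of t \<in> {1..L}"
      using assms nth_mem unfolding next_of_def by blast+
    then show "(\<Sum>i\<in>{1..L}. \<Sum>j\<in>{1..L}.
                 if is ! t = i \<and> next_of t = j then pair_weight r i j else 0)
             = pair_weight r (is ! t) (next_of t)"
      by (simp add: if_if_eq_conj[symmetric] sum.If_cases)
  qed
  finally show ?thesis unfolding next_of_def .
qed

lemma gprod_replicate:
  assumes "group G" "y \<in> carrier G"
  shows "gprod G (replicate k y) = y [^]\<^bsub>G\<^esub> k"
proof (induction k)
  case 0
  then show ?case by (simp add: gprod_def)
next
  case (Suc k)
  then show ?case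
    using monoid.nat_pow_Suc2[OF group.is_monoid[OF assms(1)] assms(2)] by (simp add: gprod_def)
qed

lemma weighted_total_disk_vec_ge_1:
  assumes G: "group G" and carrier: "\<forall>i\<in>{1..L}. a i \<in> carrier G"
    and "0 \<le> r" "r \<le> 1"
    and order_bound: "\<forall>i\<in>{1..L}. \<forall>k\<ge>1. a i [^]\<^bsub>G\<^esub> k = \<one>\<^bsub>G\<^esub> \<longrightarrow> 1 \<le> real k * r"
    and disk: "disk_seq G L a is"
  shows "1 \<le> weighted_total r L (disk_vec is)"
proof -
  have ne: "is \<noteq> []" and sub: "set is \<subseteq> {1..L}" and prod: "gprod G (map a is) = \<one>\<^bsub>G\<^esub>"
    using disk unfolding disk_seq_def by auto
  define k where "k = length is"
  define g where "g t = pair_weight r (is ! t) (is ! (Suc t mod k))" for t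
  have total: "weighted_total r L (disk_vec is) = (\<Sum>t<k. g t)"
    using weighted_total_disk_vec[OF sub] unfolding g_def k_def by simp
  have g_nonneg: "0 \<le> g t" for t
    unfolding g_def using \<open>0 \<le> r\<close> \<open>r \<le> 1\<close> by (rule pair_weight_nonneg)
  show ?thesis
  proof (cases "\<exists>t<k. is ! t < is ! (Suc t mod k)")
    case True
    then obtain t where t: "t < k" "is ! t < is ! (Suc t mod k)" by auto
    obtain t' where t': "t' < k" "is ! (Suc t' mod k) \<le> is ! t'"
      using cyclic_non_ascent[OF ne] k_def by auto
    have "t \<noteq> t'" using t t' by auto
    have "1 = g t + g t'" using t t' unfolding g_def pair_weight_def by auto
    also have "\<dots> = (\<Sum>s\<in>{t, t'}. g s)" using \<open>t \<noteq> t'\<close> by simp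
    also have "\<dots> \<le> (\<Sum>s<k. g s)" by (rule sum_mono2) (use t t' g_nonneg in auto)
    finally show ?thesis using total by simp
  next
    case False
    then have "is = replicate k (is ! 0)"
      using cyclic_non_ascending_const[OF ne] unfolding k_def by (meson not_less)
    moreover have i0: "is ! 0 \<in> {1..L}" using sub ne nth_mem by blast
    ultimately have "a (is ! 0) [^]\<^bsub>G\<^esub> k = \<one>\<^bsub>G\<^esub>"
      using prod gprod_replicate[OF G, of "a (is ! 0)" k] carrier by (metis map_replicate)
    moreover have "k \<ge> 1" using ne k_def by (simp add: Suc_leI)
    ultimately have "1 \<le> real k * r" using order_bound i0 by blast
    moreover have "g t = r" if "t < k" for t
      using \<open>is = replicate k (is ! 0)\<close> that \<open>k \<ge> 1\<close> unfolding g_def pair_weight_def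
      by (metis le_refl mod_less_divisor nth_replicate zero_less_one order_less_le_trans)
    ultimately show ?thesis using total by simp
  qed
qed

lemma kappa_le_weighted_total:
  assumes "0 \<le> r" "r \<le> 1"
    and disk_weight: "\<And>is. disk_seq G L a is \<Longrightarrow> 1 \<le> weighted_total r L (disk_vec is)"
    and x_nonneg: "\<forall>i\<in>{1..L}. \<forall>j\<in>{1..L}. 0 \<le> x i j"
  shows "kappa G L a x \<le> weighted_total r L x"
  unfolding kappa_def
proof (rule cSup_least)
  show "{\<Sum>(t, is) \<leftarrow> ds. t | ds. (\<forall>(t, is) \<in> set ds. t \<ge> 0 \<and> disk_seq G L a is)
      \<and> (\<exists>x'. \<forall>i\<in>{1..L}. \<forall>j\<in>{1..L}. x' i j \<ge> 0
              \<and> x i j = (\<Sum>(t, is) \<leftarrow> ds. t * disk_vec is i j) + x' i j)} \<noteq> {}"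
    using x_nonneg by (intro ex_in_conv[THEN iffD1] exI[of _ 0] CollectI exI[of _ "[]"]) auto
next
  fix v
  assume "v \<in> {\<Sum>(t, is) \<leftarrow> ds. t | ds. (\<forall>(t, is) \<in> set ds. t \<ge> 0 \<and> disk_seq G L a is)
      \<and> (\<exists>x'. \<forall>i\<in>{1..L}. \<forall>j\<in>{1..L}. x' i j \<ge> 0
              \<and> x i j = (\<Sum>(t, is) \<leftarrow> ds. t * disk_vec is i j) + x' i j)}"
  then obtain ds x' where v: "v = (\<Sum>(t, is) \<leftarrow> ds. t)"
    and ds: "\<forall>(t, is) \<in> set ds. t \<ge> 0 \<and> disk_seq G L a is"
    and x': "\<forall>i\<in>{1..L}. \<forall>j\<in>{1..L}. x' i j \<ge> 0
              \<and> x i j = (\<Sum>(t, is) \<leftarrow> ds. t * disk_vec is i j) + x' i j" by blast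
  have "v \<le> (\<Sum>(t, is) \<leftarrow> ds. t * weighted_total r L (disk_vec is))"
    unfolding v
  proof (rule sum_list_mono)
    fix p assume "p \<in> set ds"
    moreover obtain t "is" where p: "p = (t, is)" by (cases p)
    ultimately have "0 \<le> t" "1 \<le> weighted_total r L (disk_vec is)"
      using ds disk_weight by auto
    then show "(case p of (t, is) \<Rightarrow> t) \<le> (case p of (t, is) \<Rightarrow> t * weighted_total r L (disk_vec is))"
      unfolding p using mult_left_mono[of 1] by fastforce
  qed
  also have "\<dots> \<le> \<dots> + weighted_total r L x'"
    using x' \<open>0 \<le> r\<close> \<open>r \<le> 1\<close> by (simp add: weighted_total_nonneg)
  also have "\<dots> = weighted_total r L (\<lambda>i j. (\<Sum>(t, is) \<leftarrow> ds. t * disk_vec is i j) + x' i j)"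
    by (simp add: weighted_total_add weighted_total_sum_list)
  also have "\<dots> = weighted_total r L x"
    unfolding weighted_total_def using x' by (intro sum.cong refl) auto
  finally show "v \<le> weighted_total r L x" .
qed

lemma eord_ne_zero: "eord G y \<noteq> 0"
  unfolding eord_def by (simp add: zero_enat_def)

lemma eord_le_of_pow_eq_one:
  assumes "group G" "y \<in> carrier G" "k \<ge> 1" "y [^]\<^bsub>G\<^esub> k = \<one>\<^bsub>G\<^esub>"
  shows "eord G y \<le> enat k"
proof -
  have "group.ord G y dvd k" using group.pow_eq_id[OF assms(1,2)] assms(4) by simp
  then show ?thesis unfolding eord_def using assms(3) by (auto dest: dvd_imp_le)
qed

lemma recip_bounds: "M \<noteq> 0 \<Longrightarrow> 0 \<le> recip M \<and> recip M \<le> 1"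
  unfolding recip_def by (cases M) (auto simp: zero_enat_def)

lemma one_le_mult_recip: "M \<noteq> 0 \<Longrightarrow> M \<le> enat k \<Longrightarrow> 1 \<le> real k * recip M"
  unfolding recip_def by (cases M) (auto simp: zero_enat_def field_simps)

lemma kappa_le_weighted_total_recip:
  assumes G: "group G" and carrier: "\<forall>i\<in>{1..L}. a i \<in> carrier G"
    and M_le: "\<forall>i\<in>{1..L}. M \<le> eord G (a i)" and "M \<noteq> 0"
    and x_nonneg: "\<forall>i\<in>{1..L}. \<forall>j\<in>{1..L}. 0 \<le> x i j"
  shows "kappa G L a x \<le> weighted_total (recip M) L x"
proof -
  have r: "0 \<le> recip M" "recip M \<le> 1" using recip_bounds[OF \<open>M \<noteq> 0\<close>] by auto
  have "\<forall>i\<in>{1..L}. \<forall>k\<ge>1. a i [^]\<^bsub>G\<^esub> k = \<one>\<^bsub>G\<^esub> \<longrightarrow> 1 \<le> real k * recip M"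
  proof (intro ballI allI impI)
    fix i and k :: nat assume "i \<in> {1..L}" "1 \<le> k" "a i [^]\<^bsub>G\<^esub> k = \<one>\<^bsub>G\<^esub>"
    then have "M \<le> enat k"
      using M_le eord_le_of_pow_eq_one[OF G] carrier order_trans by blast
    then show "1 \<le> real k * recip M" using one_le_mult_recip[OF \<open>M \<noteq> 0\<close>] by blast
  qed
  then show ?thesis
    using kappa_le_weighted_total[OF r _ x_nonneg] weighted_total_disk_vec_ge_1[OF G carrier r]
    by blast
qed

lemma sum_filtered_pairs:
  assumes "finite I" "finite J"
  shows "(\<Sum>(i, j) \<in> {(i, j). i \<in> I \<and> j \<in> J \<and> P i j}. f i j)
           = (\<Sum>i\<in>I. \<Sum>j\<in>J. if P i j then f i j else 0)"
proof -
  have "{(i, j). i \<in> I \<and> j \<in> J \<and> P i j} = Sigma I (\<lambda>i. {j \<in> J. P i j})" by auto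
  then show ?thesis
    using assms by (simp add: sum.Sigma[symmetric] sum.inter_filter)
qed

lemma weighted_total_eq_split_sums:
  "weighted_total r L x
     = r * (\<Sum>(i, j) \<in> {(i, j). i \<in> {1..L} \<and> j \<in> {1..L} \<and> j \<le> i}. x i j)
       + (1 - r) * (\<Sum>(i, j) \<in> {(i, j). i \<in> {1..L} \<and> j \<in> {1..L} \<and> i < j}. x i j)"
  unfolding sum_filtered_pairs[OF finite_atLeastAtMost finite_atLeastAtMost]
    weighted_total_def pair_weight_def
  by (auto simp: sum_distrib_left sum.distrib[symmetric] intro!: sum.cong)

theorem mainTheorem5:
  fixes A :: "('a, 'c) monoid_scheme" and B :: "('b, 'd) monoid_scheme"
    and L :: nat and a :: "nat \<Rightarrow> 'a" and b :: "nat \<Rightarrow> 'b"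
    and x :: "nat \<Rightarrow> nat \<Rightarrow> real"
  assumes "group A" and "group B" and "L \<ge> 1"
    and "\<forall>i\<in>{1..L}. a i \<in> carrier A \<and> a i \<noteq> \<one>\<^bsub>A\<^esub>"
    and "\<forall>i\<in>{1..L}. b i \<in> carrier B \<and> b i \<noteq> \<one>\<^bsub>B\<^esub>"
    and "inV L x"
  shows "(kappa A L a x \<le> recip (Nmin A B L a b) * (\<Sum>(i, j) \<in> {(i, j). i \<in> {1..L} \<and> j \<in> {1..L} \<and> j \<le> i}. x i j)
           + (1 - recip (Nmin A B L a b)) * (\<Sum>(i, j) \<in> {(i, j). i \<in> {1..L} \<and> j \<in> {1..L} \<and> i < j}. x i j))
    \<and> (kappa B L b x \<le> recip (Nmin A B L a b) * (\<Sum>(i, j) \<in> {(i, j). i \<in> {1..L} \<and> j \<in> {1..L} \<and> j \<le> i}. x i j)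
           + (1 - recip (Nmin A B L a b)) * (\<Sum>(i, j) \<in> {(i, j). i \<in> {1..L} \<and> j \<in> {1..L} \<and> i < j}. x i j))"
proof -
  define orders where "orders = (\<lambda>i. eord A (a i)) ` {1..L} \<union> (\<lambda>i. eord B (b i)) ` {1..L}"
  define M where "M = Nmin A B L a b"
  have "finite orders" "orders \<noteq> {}" unfolding orders_def using \<open>L \<ge> 1\<close> by auto
  have M_Min: "M = Min orders" unfolding M_def Nmin_def orders_def ..
  have M_le: "\<forall>i\<in>{1..L}. M \<le> eord A (a i) \<and> M \<le> eord B (b i)"
    unfolding M_Min using \<open>finite orders\<close> by (auto simp: orders_def)
  have "M \<noteq> 0"
    using Min_in[OF \<open>finite orders\<close> \<open>orders \<noteq> {}\<close>]
    unfolding M_Min orders_def by (auto simp: eord_ne_zero)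
  have x_nonneg: "\<forall>i\<in>{1..L}. \<forall>j\<in>{1..L}. 0 \<le> x i j" using \<open>inV L x\<close> unfolding inV_def by blast
  have "kappa A L a x \<le> weighted_total (recip M) L x"
    using assms(1,4) M_le \<open>M \<noteq> 0\<close> x_nonneg by (intro kappa_le_weighted_total_recip) auto
  moreover have "kappa B L b x \<le> weighted_total (recip M) L x"
    using assms(2,5) M_le \<open>M \<noteq> 0\<close> x_nonneg by (intro kappa_le_weighted_total_recip) auto
  ultimately show ?thesis unfolding weighted_total_eq_split_sums M_def by blast
qed

end
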